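(* There is an absolute constant $C$ such that for every tree $T$ (in the sense of the context), every $j\in\mathcal{J}(T)$ and every $0\le t\le1$, $$|I_T(t,j)|\le (Ct)^{|T^0|/2}\prod_{v\in T^0}\langle\sigma(j,v)\rangle^{-1/2}.$$
   Context: A tree is a finite rooted tree in which every node has either zero or three children; the children of a node $v$ with three children are denoted $v_1,v_2,v_3$. $T^0$ is the set of non-terminal nodes and $T^\infty$ the set of terminal nodes. For nodes, $v<w$ means $v$ is a (strict) descendant of $w$. $\mathcal{J}(T)$ is the set of $j\in\mathbb{Z}^T$ such that for every $v\in T^0$, $j_v=j_{v_1}+j_{v_2}+j_{v_3}$ and either $j_{v_i}\neq j_v$ for all $i=1,2,3$, or $j_{v_1}=-j_{v_2}=j_{v_3}=j_v$. Let $\sigma(n_1,n_2,n_3)=(n_1+n_2+n_3)^3-n_1^3-n_2^3-n_3^3=3(n_1+n_2)(n_2+n_3)(n_3+n_1)$, and for $v\in T^0$, $\sigma(j,v)=\sigma(j_{v_1},j_{v_2},j_{v_3})$. $\langle x\rangle=(1+x^2)^{1/2}$. $\mathcal{R}(T,t)=\{s\in\mathbb{R}_+^{T^0}: 0\le s_v\le s_w\le t\text{ whenever }v<w\}$, $c(j,s)=\prod_{v\in T^0}e^{i\sigma(j,v)s_v}$, and $I_T(t,j)=\int_{\mathcal{R}(T,t)}c(j,s)\,ds$. *)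

theory Defs
  imports "HOL-Analysis.Analysis"
begin

datatype tree = Leaf | Node tree tree tree

text \<open>Nodes are addressed by paths from the root; the children of node v are
  v@[0], v@[1], v@[2] (i.e. v_1, v_2, v_3).\<close>
fun nodes :: "tree \<Rightarrow> nat list set" where
  "nodes Leaf = {[]}"
| "nodes (Node a b c) = insert [] ((\<lambda>p. 0 # p) ` nodes a \<union> (\<lambda>p. 1 # p) ` nodes b
      \<union> (\<lambda>p. 2 # p) ` nodes c)"

fun inodes :: "tree \<Rightarrow> nat list set" where
  "inodes Leaf = {}"
| "inodes (Node a b c) = insert [] ((\<lambda>p. 0 # p) ` inodes a \<union> (\<lambda>p. 1 # p) ` inodes b
      \<union> (\<lambda>p. 2 # p) ` inodes c)"

definition tnodes :: "tree \<Rightarrow> nat list set" where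
  "tnodes T = nodes T - inodes T"

definition desc :: "nat list \<Rightarrow> nat list \<Rightarrow> bool" where
  "desc v w \<longleftrightarrow> (\<exists>u. u \<noteq> [] \<and> v = w @ u)"

definition child :: "nat list \<Rightarrow> nat \<Rightarrow> nat list" where
  "child v i = v @ [i - 1]"

definition JT :: "tree \<Rightarrow> (nat list \<Rightarrow> int) set" where
  "JT T = {j. \<forall>v\<in>inodes T.
      j v = j (child v 1) + j (child v 2) + j (child v 3) \<and>
      ((\<forall>i\<in>{1,2,3}. j (child v i) \<noteq> j v) \<or>
       (j (child v 1) = j v \<and> j (child v 2) = - j v \<and> j (child v 3) = j v))}"

definition sigma3 :: "int \<Rightarrow> int \<Rightarrow> int \<Rightarrow> int" where
  "sigma3 n1 n2 n3 = (n1 + n2 + n3)^3 - n1^3 - n2^3 - n3^3"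

definition sigmaT :: "(nat list \<Rightarrow> int) \<Rightarrow> nat list \<Rightarrow> int" where
  "sigmaT j v = sigma3 (j (child v 1)) (j (child v 2)) (j (child v 3))"

definition jbr :: "real \<Rightarrow> real" where
  "jbr x = sqrt (1 + x^2)"

definition RT :: "tree \<Rightarrow> real \<Rightarrow> (nat list \<Rightarrow> real) set" where
  "RT T t = {s \<in> inodes T \<rightarrow>\<^sub>E UNIV.
      (\<forall>v\<in>inodes T. 0 \<le> s v \<and> s v \<le> t) \<and>
      (\<forall>v\<in>inodes T. \<forall>w\<in>inodes T. desc v w \<longrightarrow> s v \<le> s w)}"

definition cjs :: "tree \<Rightarrow> (nat list \<Rightarrow> int) \<Rightarrow> (nat list \<Rightarrow> real) \<Rightarrow> complex" where
  "cjs T j s = (\<Prod>v\<in>inodes T. exp (\<i> * of_real (of_int (sigmaT j v) * s v)))"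

definition IT :: "tree \<Rightarrow> real \<Rightarrow> (nat list \<Rightarrow> int) \<Rightarrow> complex" where
  "IT T t j = (\<integral>s. indicator (RT T t) s *\<^sub>R cjs T j s
      \<partial>(PiM (inodes T) (\<lambda>_. lborel)))"

end

theory Submission
  imports Defs
begin

(* Fubini turns I_T(t,j) into an iterated one-dimensional integral: the root time u runs
   over [0,t] and every subtree contributes its own integral up to time u.  Such iterated
   integrals are studied for a more flexible class of "amplitude trees", in which every node
   carries a real frequency nu, a C^1 amplitude a with |a(s)| <= s^k, |a'(s)| <= k s^(k-1), and
   integrates e^(i nu s) a(s) times the product of its children's integrals.  For them
     |J_L(T)| <= prod_v 5 T^(k_v+1) / <T nu_v>^(1/2)        (0 <= T <= 1)
   holds, by induction on the number of nodes.  A single node is estimated by integrating by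
   parts.  Otherwise some node has three leaves as children; integrating it by parts merges it
   into its parent and writes J_L as a combination of two trees with one node less, whose
   bounds add up to the bound of L by a Peetre-type inequality for <x>^(1/2). *)


section \<open>The half Japanese bracket\<close>

definition hbr :: "real \<Rightarrow> real" where
  "hbr x = sqrt (jbr x)"

lemma jbr_ge1: "jbr x \<ge> 1"
  unfolding jbr_def by simp

lemma jbr_pos: "jbr x > 0"
  using jbr_ge1[of x] by linarith

lemma hbr_pos: "hbr x > 0"
  unfolding hbr_def using jbr_pos by simp

lemma hbr_le_jbr: "hbr x \<le> jbr x"
proof -
  have "jbr x \<le> jbr x * jbr x" using jbr_ge1[of x] by simp
  then have "sqrt (jbr x) \<le> sqrt (jbr x * jbr x)" by (rule real_sqrt_le_mono)
  then show ?thesis unfolding hbr_def using jbr_pos[of x] by simp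
qed

lemma hbr_square: "(hbr x)^2 = jbr x"
  unfolding hbr_def using jbr_pos[of x] by simp

lemma hbr_pow4: "(hbr x)^4 = 1 + x^2"
proof -
  have "(hbr x)^4 = ((hbr x)^2)^2" by simp
  also have "\<dots> = 1 + x^2" unfolding hbr_square jbr_def by simp
  finally show ?thesis .
qed

lemma jbr_powr_neg_half: "jbr x powr (-1/2) = 1 / hbr x"
proof -
  have "jbr x powr (-1/2) = 1 / (jbr x powr (1/2))" by (simp add: powr_minus_divide[symmetric])
  also have "\<dots> = 1 / hbr x" unfolding hbr_def using jbr_pos[of x] by (simp add: powr_half_sqrt)
  finally show ?thesis .
qed

lemma jbr_le_large: "\<bar>y\<bar> \<ge> 1 \<Longrightarrow> jbr y \<le> 3/2 * \<bar>y\<bar>"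
proof -
  assume a: "\<bar>y\<bar> \<ge> 1"
  have "1 \<le> y^2" using a by (metis abs_le_square_iff abs_one one_power2 power2_abs)
  moreover have "(3/2 * \<bar>y\<bar>)^2 = 9/4 * y^2" by (cases "y \<ge> 0") (auto simp: power2_eq_square)
  ultimately have "1 + y^2 \<le> (3/2 * \<bar>y\<bar>)^2" by linarith
  then show ?thesis unfolding jbr_def using a by (intro real_le_lsqrt) auto
qed

text \<open>The two regimes of a one-node estimate: the trivial bound \<open>c\<close> suffices for small
  frequencies, the integration-by-parts bound \<open>2c/\<bar>x\<bar>\<close> for large ones.\<close>
lemma small_freq_le: assumes "\<bar>x\<bar> \<le> 1" "0 \<le> c" shows "c \<le> 5 * c / hbr x"
proof -
  have "x^2 \<le> 1" using assms by (simp add: abs_square_le_1)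
  then have "jbr x \<le> 2" unfolding jbr_def by (intro real_le_lsqrt) auto
  then have "c * hbr x \<le> c * 5" using hbr_le_jbr[of x] assms by (intro mult_left_mono) auto
  then show ?thesis using hbr_pos[of x] by (simp add: le_divide_eq mult.commute)
qed

lemma large_freq_le: assumes "1 \<le> \<bar>x\<bar>" "0 \<le> c" shows "2 * c / \<bar>x\<bar> \<le> 5 * c / hbr x"
proof -
  have "hbr x \<le> 3/2 * \<bar>x\<bar>" using hbr_le_jbr[of x] jbr_le_large[of x] assms by linarith
  then have "2 * c * hbr x \<le> 2 * c * (3/2 * \<bar>x\<bar>)" using assms by (intro mult_left_mono) auto
  also have "\<dots> \<le> 5 * c * \<bar>x\<bar>" using assms by simp
  finally show ?thesis using assms hbr_pos[of x] by (simp add: divide_simps)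
qed

lemma peetre_hbr: "hbr x \<le> 2 * hbr (x+y) * hbr y"
proof -
  have "x^2 \<le> 2*(x+y)^2 + 2*y^2"
  proof -
    have "2*(x+y)^2 + 2*y^2 - x^2 = (x+2*y)^2" by (simp add: power2_eq_square algebra_simps)
    then show ?thesis using zero_le_power2[of "x+2*y"] by linarith
  qed
  moreover have "1 + c \<le> 16*((1+a)*(1+b))" if "0 \<le> a" "0 \<le> b" "c \<le> 2*a + 2*b" for a b c :: real
  proof -
    have "(1+a)*(1+b) = 1 + a + b + a*b" by (simp add: algebra_simps)
    moreover have "0 \<le> a*b" using that by simp
    ultimately show ?thesis using that by linarith
  qed
  ultimately have "1 + x^2 \<le> 16 * ((1 + (x+y)^2) * (1 + y^2))" by simp
  moreover have "(2 * hbr (x+y) * hbr y)^4 = 16 * ((1 + (x+y)^2) * (1 + y^2))"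
    unfolding power_mult_distrib hbr_pow4 by simp
  ultimately have "(hbr x)^4 \<le> (2 * hbr (x+y) * hbr y)^4" by (simp add: hbr_pow4)
  moreover have "0 \<le> 2 * hbr (x+y) * hbr y" using hbr_pos by (auto simp: less_imp_le)
  ultimately show ?thesis using hbr_pos[of x] power_mono_iff[of "hbr x" "2 * hbr (x+y) * hbr y" 4]
    by simp
qed

text \<open>The inequality that makes merging a node into its parent lossless: integrating by parts in
  a child of frequency \<open>y\<close> below a parent of frequency \<open>x\<close> gains \<open>1/\<bar>y\<bar>\<close> and produces the two
  frequencies \<open>x+y\<close> and \<open>x\<close>.\<close>
lemma merge_ineq:
  assumes "\<bar>y\<bar> \<ge> 1"
  shows "(1 / hbr (x+y) + 1 / hbr x) / \<bar>y\<bar> \<le> 5 / (hbr x * hbr y)"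
proof -
  have p: "hbr x > 0" "hbr y > 0" "hbr (x+y) > 0" "\<bar>y\<bar> > 0" using hbr_pos assms by auto
  have A: "hbr x * hbr y / hbr (x+y) \<le> 2 * (hbr y)^2"
    using peetre_hbr[of x y] p by (simp add: divide_le_eq power2_eq_square algebra_simps)
  have B: "2 * (hbr y)^2 \<le> 3 * \<bar>y\<bar>" using jbr_le_large[OF assms] hbr_square[of y] by linarith
  have C: "hbr y \<le> 3/2 * \<bar>y\<bar>" using jbr_le_large[OF assms] hbr_le_jbr[of y] by linarith
  have "(1 / hbr (x+y) + 1 / hbr x) / \<bar>y\<bar> = (hbr x * hbr y / hbr (x+y) + hbr y) / (\<bar>y\<bar> * (hbr x * hbr y))"
    using p by (simp add: field_simps)
  also have "\<dots> \<le> (5 * \<bar>y\<bar>) / (\<bar>y\<bar> * (hbr x * hbr y))"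
    using A B C p by (intro divide_right_mono) auto
  also have "\<dots> = 5 / (hbr x * hbr y)" using p by simp
  finally show ?thesis .
qed

text \<open>Rescaling time: a node integrated up to \<open>t \<le> 1\<close> gains \<open>\<surd>t\<close> per node.\<close>
lemma hbr_rescale:
  assumes "0 \<le> t" "t \<le> 1"
  shows "t / hbr (t * x) \<le> sqrt t / hbr x"
proof -
  have a: "sqrt t * hbr x \<le> hbr (t * x)"
  proof -
    have "(sqrt t * hbr x)^4 = t^2 * (1 + x^2)"
      using assms by (simp add: power_mult_distrib hbr_pow4 power2_eq_square[symmetric])
        (metis power2_eq_square real_sqrt_pow2 power_mult power_even_eq numeral_Bit0 mult_2)
    also have "\<dots> \<le> 1 + (t*x)^2"
    proof -
      have "t^2 \<le> 1" using assms by (simp add: power_le_one)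
      then show ?thesis by (simp add: power_mult_distrib algebra_simps)
    qed
    also have "\<dots> = (hbr (t*x))^4" by (simp add: hbr_pow4)
    finally have "(sqrt t * hbr x)^4 \<le> (hbr (t*x))^4" .
    moreover have "0 \<le> sqrt t * hbr x" "0 \<le> hbr (t*x)" using assms hbr_pos[of x] hbr_pos[of "t*x"] by auto
    ultimately show ?thesis using power_mono_iff[of "sqrt t * hbr x" "hbr (t*x)" 4] by simp
  qed
  have "t * hbr x = sqrt t * (sqrt t * hbr x)" using assms by (simp add: real_sqrt_mult_self mult.assoc[symmetric])
  also have "\<dots> \<le> sqrt t * hbr (t * x)" using a assms by (intro mult_left_mono) auto
  finally have "t * hbr x \<le> sqrt t * hbr (t*x)" .
  then show ?thesis using hbr_pos[of x] hbr_pos[of "t*x"] by (simp add: divide_simps mult.commute)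
qed


section \<open>Oscillatory factors, amplitudes and integration by parts\<close>

definition wave :: "real \<Rightarrow> real \<Rightarrow> complex" where
  "wave \<nu> u = exp (\<i> * of_real (\<nu> * u))"

lemma wave_deriv: "(wave \<nu> has_vector_derivative (\<i> * of_real \<nu> * wave \<nu> u)) (at u within S)"
proof -
  have D: "((\<lambda>z. exp (\<i> * of_real \<nu> * z)) has_field_derivative (\<i> * of_real \<nu> * exp (\<i> * of_real \<nu> * of_real u))) (at (of_real u))"
    by (auto intro!: derivative_eq_intros)
  have eq: "wave \<nu> = (\<lambda>x. exp (\<i> * (of_real \<nu> * of_real x)))" by (auto simp: wave_def fun_eq_iff)
  from has_vector_derivative_real_field[OF D] show ?thesis
    unfolding eq by (simp add: mult.assoc)
qed

lemma wave_cont: "continuous_on S (wave \<nu>)"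
  unfolding wave_def by (intro continuous_intros)

lemma norm_wave [simp]: "norm (wave \<nu> u) = 1"
  unfolding wave_def by (simp add: norm_exp_i_times)

lemma wave_zero [simp]: "wave \<nu> 0 = 1"
  by (simp add: wave_def)

lemma wave_add: "wave (\<nu> + \<nu>') u = wave \<nu> u * wave \<nu>' u"
  unfolding wave_def by (simp add: distrib_right exp_add[symmetric] algebra_simps)

lemma cont_wave_mult: "continuous_on {0..1} a \<Longrightarrow> continuous_on {0..1} (\<lambda>u. wave \<nu> u * a u)"
  using wave_cont by (intro continuous_intros) auto

text \<open>Amplitudes arise when inner time integrals are absorbed
  into their parent.\<close>
definition amplitude :: "nat \<Rightarrow> (real \<Rightarrow> complex) \<Rightarrow> (real \<Rightarrow> complex) \<Rightarrow> bool" where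
  "amplitude k a a' \<longleftrightarrow> continuous_on {0..1} a' \<and>
     (\<forall>s\<in>{0..1}. (a has_vector_derivative a' s) (at s within {0..1})
        \<and> norm (a s) \<le> s^k \<and> norm (a' s) \<le> real k * s^(k-1))"

lemma amplitude_cont: "amplitude k a a' \<Longrightarrow> continuous_on {0..1} a"
  unfolding amplitude_def continuous_on_eq_continuous_within
  using has_vector_derivative_continuous by blast

lemma amplitude_const: "amplitude 0 (\<lambda>_. 1) (\<lambda>_. 0)"
  unfolding amplitude_def by (auto intro!: derivative_eq_intros)

lemma amplitude_mult:
  assumes "amplitude k1 a a1" "amplitude k2 b b1"
  shows "amplitude (k1+k2) (\<lambda>s. a s * b s) (\<lambda>s. a s * b1 s + a1 s * b s)"
  unfolding amplitude_def
proof (intro conjI ballI)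
  show "continuous_on {0..1} (\<lambda>s. a s * b1 s + a1 s * b s)"
    using assms amplitude_cont[OF assms(1)] amplitude_cont[OF assms(2)] unfolding amplitude_def
    by (intro continuous_intros) auto
  fix s :: real assume s: "s \<in> {0..1}"
  show "((\<lambda>s. a s * b s) has_vector_derivative a s * b1 s + a1 s * b s) (at s within {0..1})"
    using assms s unfolding amplitude_def by (auto intro!: has_vector_derivative_mult)
  have s0: "0 \<le> s" using s by auto
  have A: "norm (a s) \<le> s^k1" "norm (a1 s) \<le> real k1 * s^(k1-1)"
    "norm (b s) \<le> s^k2" "norm (b1 s) \<le> real k2 * s^(k2-1)"
    using assms s unfolding amplitude_def by auto
  show "norm (a s * b s) \<le> s^(k1+k2)"
    using A s0 by (simp add: norm_mult power_add mult_mono)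
  have e1: "real k1 * s^(k1-1) * s^k2 = real k1 * s^(k1+k2-1)"
    by (cases k1) (auto simp: power_add)
  have e2: "s^k1 * (real k2 * s^(k2-1)) = real k2 * s^(k1+k2-1)"
    by (cases k2) (auto simp: power_add)
  have "norm (a s * b1 s + a1 s * b s) \<le> norm (a s) * norm (b1 s) + norm (a1 s) * norm (b s)"
    by (metis norm_mult norm_triangle_ineq)
  also have "\<dots> \<le> s^k1 * (real k2 * s^(k2-1)) + real k1 * s^(k1-1) * s^k2"
    using A s0 by (intro add_mono mult_mono) auto
  also have "\<dots> = real (k1+k2) * s^(k1+k2-1)" unfolding e1 e2 by (simp add: algebra_simps)
  finally show "norm (a s * b1 s + a1 s * b s) \<le> real (k1+k2) * s^(k1+k2-1)" .
qed

lemma integrable_on_initial: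
  fixes f :: "real \<Rightarrow> 'a::banach"
  shows "continuous_on {0..1} f \<Longrightarrow> s \<in> {0..1} \<Longrightarrow> f integrable_on {0..s}"
  by (rule integrable_continuous_interval) (auto elim: continuous_on_subset)

lemma integral_lin2:
  fixes f g :: "real \<Rightarrow> complex"
  assumes "continuous_on {0..1} f" "continuous_on {0..1} g" "s \<in> {0..1}"
  shows "integral {0..s} (\<lambda>u. c1 * f u + c2 * g u) = c1 * integral {0..s} f + c2 * integral {0..s} g"
proof -
  have "f integrable_on {0..s}" "g integrable_on {0..s}" using assms integrable_on_initial by auto
  then show ?thesis by (subst integral_add) (auto intro: integrable_on_mult_right)
qed

lemma norm_wave_integral_le:
  assumes "amplitude k a a'" "s \<in> {0..1}"
  shows "norm (integral {0..s} (\<lambda>u. wave \<nu> u * a u)) \<le> s^(k+1)"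
proof -
  have "norm (integral {0..s} (\<lambda>u. wave \<nu> u * a u)) \<le> integral {0..s} (\<lambda>_. s^k)"
  proof (rule integral_norm_bound_integral)
    show "(\<lambda>u. wave \<nu> u * a u) integrable_on {0..s}"
      using cont_wave_mult[OF amplitude_cont[OF assms(1)]] assms(2) by (rule integrable_on_initial)
    fix u assume u: "u \<in> {0..s}"
    then have "norm (a u) \<le> u^k" using assms unfolding amplitude_def by auto
    also have "\<dots> \<le> s^k" using u by (auto intro: power_mono)
    finally show "norm (wave \<nu> u * a u) \<le> s^k" by (simp add: norm_mult)
  qed auto
  then show ?thesis using assms(2) by (simp add: mult.commute)
qed

lemma amplitude_primitive:
  assumes "amplitude k a a'"
  shows "amplitude (k+1) (\<lambda>s. integral {0..s} (\<lambda>u. wave \<nu> u * a u)) (\<lambda>s. wave \<nu> s * a s)"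
  unfolding amplitude_def
proof (intro conjI ballI)
  have ca: "continuous_on {0..1} (\<lambda>u. wave \<nu> u * a u)"
    using amplitude_cont[OF assms] by (rule cont_wave_mult)
  then show "continuous_on {0..1} (\<lambda>u. wave \<nu> u * a u)" .
  fix s :: real assume s: "s \<in> {0..1}"
  show "((\<lambda>s. integral {0..s} (\<lambda>u. wave \<nu> u * a u)) has_vector_derivative wave \<nu> s * a s) (at s within {0..1})"
    using integral_has_vector_derivative[OF ca s] .
  show "norm (integral {0..s} (\<lambda>u. wave \<nu> u * a u)) \<le> s^(k+1)"
    using norm_wave_integral_le[OF assms s] .
  have "norm (a s) \<le> s^k" using assms s unfolding amplitude_def by auto
  also have "\<dots> \<le> real (k+1) * s^(k+1-1)"
  proof -
    have "0 \<le> real k * s^k" using s by simp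
    then show ?thesis by (simp add: algebra_simps)
  qed
  finally show "norm (wave \<nu> s * a s) \<le> real (k+1) * s^(k+1-1)" by (simp add: norm_mult)
qed

definition ibp_rest :: "real \<Rightarrow> (real \<Rightarrow> complex) \<Rightarrow> (real \<Rightarrow> complex) \<Rightarrow> real \<Rightarrow> complex" where
  "ibp_rest \<nu> a a' s = a 0 + integral {0..s} (\<lambda>u. wave \<nu> u * a' u)"

lemma integration_by_parts:
  assumes "amplitude k a a'" "\<nu> \<noteq> 0" "s \<in> {0..1}"
  shows "integral {0..s} (\<lambda>u. wave \<nu> u * a u) = (wave \<nu> s * a s - ibp_rest \<nu> a a' s) / (\<i> * of_real \<nu>)"
proof -
  have ca: "continuous_on {0..1} (\<lambda>u. wave \<nu> u * a u)"
    using amplitude_cont[OF assms(1)] by (rule cont_wave_mult)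
  have ca': "continuous_on {0..1} (\<lambda>u. wave \<nu> u * a' u)"
    using assms(1) unfolding amplitude_def by (intro cont_wave_mult) auto
  have "((\<lambda>u. wave \<nu> u * a' u + (\<i> * of_real \<nu> * wave \<nu> u) * a u) has_integral (wave \<nu> s * a s - wave \<nu> 0 * a 0)) {0..s}"
  proof (rule fundamental_theorem_of_calculus)
    show "0 \<le> s" using assms by auto
    fix x assume x: "x \<in> {0..s}"
    then have "(a has_vector_derivative a' x) (at x within {0..1})"
      using assms unfolding amplitude_def by auto
    then have "(a has_vector_derivative a' x) (at x within {0..s})"
      by (rule has_vector_derivative_within_subset) (use assms in auto)
    from has_vector_derivative_mult[OF wave_deriv this]
    show "((\<lambda>u. wave \<nu> u * a u) has_vector_derivative wave \<nu> x * a' x + \<i> * complex_of_real \<nu> * wave \<nu> x * a x) (at x within {0..s})" .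
  qed
  then have "integral {0..s} (\<lambda>u. wave \<nu> u * a' u + (\<i> * of_real \<nu>) * (wave \<nu> u * a u)) = wave \<nu> s * a s - a 0"
    by (auto dest!: integral_unique simp: mult.assoc)
  moreover have "integral {0..s} (\<lambda>u. wave \<nu> u * a' u + (\<i> * of_real \<nu>) * (wave \<nu> u * a u))
      = integral {0..s} (\<lambda>u. wave \<nu> u * a' u) + (\<i> * of_real \<nu>) * integral {0..s} (\<lambda>u. wave \<nu> u * a u)"
    using integral_lin2[OF ca' ca assms(3), of 1 "\<i> * of_real \<nu>"] by simp
  ultimately have "(\<i> * of_real \<nu>) * integral {0..s} (\<lambda>u. wave \<nu> u * a u) = wave \<nu> s * a s - ibp_rest \<nu> a a' s"
    unfolding ibp_rest_def by (simp add: algebra_simps)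
  then show ?thesis using assms(2) by (simp add: field_simps)
qed

lemma integral_power_deriv:
  assumes "0 \<le> s"
  shows "integral {0..s} (\<lambda>u. real k * u^(k-1)) = s^k - 0^k"
proof -
  have "((\<lambda>u. real k * u^(k - 1)) has_integral (s^k - 0^k)) {0..s}"
    using assms
    by (intro fundamental_theorem_of_calculus)
       (auto simp: has_real_derivative_iff_has_vector_derivative[symmetric] intro!: DERIV_pow)
  then show ?thesis by (rule integral_unique)
qed

lemma amplitude_ibp_rest:
  assumes "amplitude k a a'"
  shows "amplitude k (ibp_rest \<nu> a a') (\<lambda>s. wave \<nu> s * a' s)"
  unfolding amplitude_def
proof (intro conjI ballI)
  have ca': "continuous_on {0..1} (\<lambda>u. wave \<nu> u * a' u)"
    using assms(1) unfolding amplitude_def by (intro cont_wave_mult) auto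
  then show "continuous_on {0..1} (\<lambda>u. wave \<nu> u * a' u)" .
  fix s :: real assume s: "s \<in> {0..1}"
  show "(ibp_rest \<nu> a a' has_vector_derivative wave \<nu> s * a' s) (at s within {0..1})"
    unfolding ibp_rest_def using integral_has_vector_derivative[OF ca' s]
    by (auto intro!: derivative_eq_intros)
  have a0: "norm (a 0) \<le> 0^k" using assms unfolding amplitude_def by auto
  have "norm (integral {0..s} (\<lambda>u. wave \<nu> u * a' u)) \<le> integral {0..s} (\<lambda>u. real k * u^(k-1))"
  proof (rule integral_norm_bound_integral)
    show "(\<lambda>u. wave \<nu> u * a' u) integrable_on {0..s}" using ca' s by (rule integrable_on_initial)
    show "(\<lambda>u. real k * u^(k-1)) integrable_on {0..s}"
      by (rule integrable_continuous_interval) (intro continuous_intros)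
    fix u assume u: "u \<in> {0..s}"
    then show "norm (wave \<nu> u * a' u) \<le> real k * u^(k-1)"
      using assms s unfolding amplitude_def by (auto simp: norm_mult)
  qed
  also have "\<dots> = s^k - 0^k" using s by (intro integral_power_deriv) auto
  finally have "norm (integral {0..s} (\<lambda>u. wave \<nu> u * a' u)) \<le> s^k - 0^k" .
  then show "norm (ibp_rest \<nu> a a' s) \<le> s^k" unfolding ibp_rest_def using a0
    by (smt (verit) norm_triangle_ineq)
  show "norm (wave \<nu> s * a' s) \<le> real k * s^(k-1)"
    using assms s unfolding amplitude_def by (auto simp: norm_mult)
qed

text \<open>The one-node estimate: \<open>\<bar>\<integral>\<^sub>0\<^sup>T e\<^sup>i\<^sup>\<nu>\<^sup>u a(u) du\<bar> \<le> 5 T\<^sup>k\<^sup>+\<^sup>1 / \<langle>T\<nu>\<rangle>\<^sup>1\<^sup>/\<^sup>2\<close>, from the trivial bound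
  when \<open>\<bar>T\<nu>\<bar> < 1\<close> and from integration by parts otherwise.\<close>
lemma wave_integral_bound:
  assumes am: "amplitude k a a'" and T: "0 \<le> T" "T \<le> 1"
  shows "norm (integral {0..T} (\<lambda>u. wave \<nu> u * a u)) \<le> 5 * T^(k+1) / hbr (T*\<nu>)"
proof (cases "\<bar>T*\<nu>\<bar> < 1")
  case True
  have "norm (integral {0..T} (\<lambda>u. wave \<nu> u * a u)) \<le> T^(k+1)"
    using norm_wave_integral_le[OF am] T by simp
  also have "\<dots> \<le> 5 * T^(k+1) / hbr (T*\<nu>)" using True T by (intro small_freq_le) auto
  finally show ?thesis .
next
  case False
  then have T0: "T \<noteq> 0" and nz: "\<nu> \<noteq> 0" by auto
  have T1: "T \<in> {0..1}" using T by auto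
  have "norm (wave \<nu> T * a T - ibp_rest \<nu> a a' T) \<le> T^k + T^k"
  proof -
    have "norm (a T) \<le> T^k" using am T1 unfolding amplitude_def by auto
    moreover have "norm (ibp_rest \<nu> a a' T) \<le> T^k"
      using amplitude_ibp_rest[OF am, of \<nu>] T1 unfolding amplitude_def by auto
    moreover have "norm (wave \<nu> T * a T - ibp_rest \<nu> a a' T) \<le> norm (a T) + norm (ibp_rest \<nu> a a' T)"
      using norm_triangle_ineq4[of "wave \<nu> T * a T"] by (simp add: norm_mult)
    ultimately show ?thesis by linarith
  qed
  then have "norm (integral {0..T} (\<lambda>u. wave \<nu> u * a u)) \<le> (2 * T^k) / \<bar>\<nu>\<bar>"
    unfolding integration_by_parts[OF am nz T1] by (simp add: norm_divide norm_mult divide_right_mono)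
  also have "\<dots> = 2 * T^(k+1) / \<bar>T*\<nu>\<bar>" using T0 T by (simp add: abs_mult)
  also have "\<dots> \<le> 5 * T^(k+1) / hbr (T*\<nu>)" using False T by (intro large_freq_le) auto
  finally show ?thesis .
qed


section \<open>Amplitude trees and their iterated integrals\<close>

text \<open>A node carries a frequency \<open>\<nu>\<close>, an amplitude \<open>a\<close> and its degree \<open>k\<close>.\<close>
datatype atree = ALeaf | ANode real "real \<Rightarrow> complex" nat atree atree atree

fun admissible :: "atree \<Rightarrow> bool" where
  "admissible ALeaf = True"
| "admissible (ANode \<nu> a k x y z) =
     ((\<exists>a'. amplitude k a a') \<and> admissible x \<and> admissible y \<and> admissible z)"

fun tint :: "atree \<Rightarrow> real \<Rightarrow> complex" where
  "tint ALeaf T = 1"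
| "tint (ANode \<nu> a k x y z) T = integral {0..T} (\<lambda>s. wave \<nu> s * a s * tint x s * tint y s * tint z s)"

fun nsize :: "atree \<Rightarrow> nat" where
  "nsize ALeaf = 0"
| "nsize (ANode \<nu> a k x y z) = Suc (nsize x + nsize y + nsize z)"

fun tbound :: "real \<Rightarrow> atree \<Rightarrow> real" where
  "tbound T ALeaf = 1"
| "tbound T (ANode \<nu> a k x y z) = 5 * T^(k+1) / hbr (T*\<nu>) * tbound T x * tbound T y * tbound T z"

lemma tbound_nonneg: "0 \<le> T \<Longrightarrow> 0 \<le> tbound T L"
  by (induction L) (auto intro!: mult_nonneg_nonneg divide_nonneg_pos hbr_pos)

lemma nsize_0_iff: "nsize L = 0 \<longleftrightarrow> L = ALeaf"
  by (cases L) auto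

lemma tint_cont: "admissible L \<Longrightarrow> continuous_on {0..1} (tint L)"
proof (induction L)
  case ALeaf then show ?case by simp
next
  case (ANode \<nu> a k x y z)
  then obtain a' where am: "amplitude k a a'" by auto
  have "continuous_on {0..1} (\<lambda>s. wave \<nu> s * a s * tint x s * tint y s * tint z s)"
    using ANode amplitude_cont[OF am] wave_cont by (intro continuous_intros) auto
  then show ?case unfolding tint.simps
    by (intro indefinite_integral_continuous_1 integrable_continuous_interval)
qed

lemma tint_single_bound:
  assumes "admissible (ANode \<nu> a k ALeaf ALeaf ALeaf)" "0 \<le> T" "T \<le> 1"
  shows "norm (tint (ANode \<nu> a k ALeaf ALeaf ALeaf) T) \<le> tbound T (ANode \<nu> a k ALeaf ALeaf ALeaf)"
  using assms wave_integral_bound[of k a _ T \<nu>] by auto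

definition reducible :: "real \<Rightarrow> atree \<Rightarrow> bool" where
  "reducible T L \<longleftrightarrow> (\<exists>c1 L1 c2 L2. admissible L1 \<and> admissible L2 \<and> nsize L1 < nsize L \<and> nsize L2 < nsize L \<and>
     (\<forall>s\<in>{0..T}. tint L s = c1 * tint L1 s + c2 * tint L2 s) \<and>
     norm c1 * tbound T L1 + norm c2 * tbound T L2 \<le> tbound T L)"

text \<open>Integrals and bounds are symmetric in the children, so reducibility is too.\<close>
lemma reducible_rotate:
  assumes "reducible T (ANode \<nu> a k y z x)"
  shows "reducible T (ANode \<nu> a k x y z)"
proof -
  have "tint (ANode \<nu> a k x y z) s = tint (ANode \<nu> a k y z x) s" for s
    by (simp add: mult_ac)
  moreover have "nsize (ANode \<nu> a k x y z) = nsize (ANode \<nu> a k y z x)" by simp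
  moreover have "tbound T (ANode \<nu> a k x y z) = tbound T (ANode \<nu> a k y z x)" by simp
  ultimately show ?thesis using assms unfolding reducible_def by metis
qed

text \<open>A reduction of the first child is inherited by the parent, by linearity of the integral.\<close>
lemma reducible_lift:
  assumes w: "admissible (ANode \<nu> a k x y z)" and T: "0 \<le> T" "T \<le> 1" and rx: "reducible T x"
  shows "reducible T (ANode \<nu> a k x y z)"
proof -
  obtain c1 x1 c2 x2 where p: "admissible x1" "admissible x2" "nsize x1 < nsize x" "nsize x2 < nsize x"
    "\<forall>s\<in>{0..T}. tint x s = c1 * tint x1 s + c2 * tint x2 s"
    "norm c1 * tbound T x1 + norm c2 * tbound T x2 \<le> tbound T x"
    using rx unfolding reducible_def by blast
  obtain a' where am: "amplitude k a a'" using w by auto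
  let ?L1 = "ANode \<nu> a k x1 y z" and ?L2 = "ANode \<nu> a k x2 y z"
  have cf: "continuous_on {0..1} (\<lambda>u. wave \<nu> u * a u * tint x' u * tint y u * tint z u)"
    if "admissible x'" for x'
    using w that amplitude_cont[OF am] wave_cont tint_cont by (intro continuous_intros) auto
  have eq: "tint (ANode \<nu> a k x y z) s = c1 * tint ?L1 s + c2 * tint ?L2 s" if s: "s \<in> {0..T}" for s
  proof -
    have "tint (ANode \<nu> a k x y z) s = integral {0..s} (\<lambda>u. c1 * (wave \<nu> u * a u * tint x1 u * tint y u * tint z u)
         + c2 * (wave \<nu> u * a u * tint x2 u * tint y u * tint z u))"
      unfolding tint.simps
    proof (rule integral_cong)
      fix u assume "u \<in> {0..s}"
      then have "u \<in> {0..T}" using s by auto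
      then show "wave \<nu> u * a u * tint x u * tint y u * tint z u = c1 * (wave \<nu> u * a u * tint x1 u * tint y u * tint z u)
         + c2 * (wave \<nu> u * a u * tint x2 u * tint y u * tint z u)" using p(5) by (simp add: algebra_simps)
    qed
    also have "\<dots> = c1 * tint ?L1 s + c2 * tint ?L2 s"
      unfolding tint.simps using cf[OF p(1)] cf[OF p(2)] s T by (intro integral_lin2) auto
    finally show ?thesis .
  qed
  define R where "R = 5 * T^(k+1) / hbr (T*\<nu>) * tbound T y * tbound T z"
  have R0: "0 \<le> R" unfolding R_def using T tbound_nonneg hbr_pos
    by (auto intro!: mult_nonneg_nonneg divide_nonneg_pos)
  have B: "tbound T (ANode \<nu> a k x' y z) = R * tbound T x'" for x' unfolding R_def by (simp add: mult_ac)
  have "norm c1 * tbound T ?L1 + norm c2 * tbound T ?L2 = R * (norm c1 * tbound T x1 + norm c2 * tbound T x2)"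
    unfolding B by (simp add: algebra_simps)
  also have "\<dots> \<le> R * tbound T x" using p(6) R0 by (rule mult_left_mono)
  finally have "norm c1 * tbound T ?L1 + norm c2 * tbound T ?L2 \<le> tbound T (ANode \<nu> a k x y z)" unfolding B .
  moreover have "admissible ?L1" "admissible ?L2" using w p am by auto
  ultimately show ?thesis unfolding reducible_def using p eq
    by (intro exI[of _ c1] exI[of _ ?L1] exI[of _ c2] exI[of _ ?L2]) auto
qed

text \<open>Merging a one-node first child of small frequency: its integral is the amplitude
  \<open>s \<mapsto> \<integral>\<^sub>0\<^sup>s e\<^sup>i\<^sup>\<nu>\<^sup>'\<^sup>u b(u) du\<close> of degree \<open>k'+1\<close>, which the parent absorbs.\<close>
lemma merge_small_freq:
  assumes w: "admissible (ANode \<nu> a k (ANode \<nu>' b k' ALeaf ALeaf ALeaf) y z)"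
    and T: "0 \<le> T" "T \<le> 1" and small: "\<bar>T*\<nu>'\<bar> \<le> 1"
  shows "reducible T (ANode \<nu> a k (ANode \<nu>' b k' ALeaf ALeaf ALeaf) y z)"
proof -
  let ?L = "ANode \<nu> a k (ANode \<nu>' b k' ALeaf ALeaf ALeaf) y z"
  let ?L1 = "ANode \<nu> (\<lambda>s. a s * integral {0..s} (\<lambda>u. wave \<nu>' u * b u)) (k + (k'+1)) ALeaf y z"
  obtain a' b' where am: "amplitude k a a'" and bm: "amplitude k' b b'" using w by auto
  have w1: "admissible ?L1" using amplitude_mult[OF am amplitude_primitive[OF bm]] w by auto
  have eq: "tint ?L s = 1 * tint ?L1 s + 0 * tint ?L1 s" for s
    by (simp add: mult_ac)
  define R where "R = 5 * T^(k+1) / hbr (T*\<nu>) * tbound T y * tbound T z"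
  have R0: "0 \<le> R" unfolding R_def using T tbound_nonneg hbr_pos
    by (auto intro!: mult_nonneg_nonneg divide_nonneg_pos)
  have "tbound T ?L1 = R * T^(k'+1)" unfolding R_def by (simp add: mult_ac power_add)
  also have "\<dots> \<le> R * (5 * T^(k'+1) / hbr (T*\<nu>'))"
    using small T by (intro mult_left_mono[OF _ R0] small_freq_le) auto
  also have "\<dots> = tbound T ?L" unfolding R_def by (simp add: mult_ac)
  finally have "norm (1::complex) * tbound T ?L1 + norm (0::complex) * tbound T ?L1 \<le> tbound T ?L" by simp
  then show ?thesis unfolding reducible_def using w1 eq
    by (intro exI[of _ 1] exI[of _ ?L1] exI[of _ 0] exI[of _ ?L1]) auto
qed

lemma tint_merge_by_parts:
  assumes am: "amplitude k a a'" and bm: "amplitude k' b b'" and wy: "admissible y" "admissible z"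
    and nz: "\<nu>' \<noteq> 0" and s: "s \<in> {0..1}"
  shows "tint (ANode \<nu> a k (ANode \<nu>' b k' ALeaf ALeaf ALeaf) y z) s =
    (tint (ANode (\<nu>+\<nu>') (\<lambda>s. a s * b s) (k + k') ALeaf y z) s
     - tint (ANode \<nu> (\<lambda>s. a s * ibp_rest \<nu>' b b' s) (k + k') ALeaf y z) s) / (\<i> * of_real \<nu>')"
proof -
  define c where "c = 1 / (\<i> * complex_of_real \<nu>')"
  define f1 where "f1 u = wave (\<nu>+\<nu>') u * (a u * b u) * tint ALeaf u * tint y u * tint z u" for u
  define f2 where "f2 u = wave \<nu> u * (a u * ibp_rest \<nu>' b b' u) * tint ALeaf u * tint y u * tint z u" for u
  have c1: "continuous_on {0..1} f1" unfolding f1_def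
    using wy amplitude_cont[OF am] amplitude_cont[OF bm] wave_cont tint_cont by (intro continuous_intros) auto
  have c2: "continuous_on {0..1} f2" unfolding f2_def
    using wy amplitude_cont[OF am] amplitude_cont[OF amplitude_ibp_rest[OF bm]] wave_cont tint_cont
    by (intro continuous_intros) auto
  have "tint (ANode \<nu> a k (ANode \<nu>' b k' ALeaf ALeaf ALeaf) y z) s = integral {0..s} (\<lambda>u. c * f1 u + (-c) * f2 u)"
    unfolding tint.simps(2)[of \<nu> a k]
  proof (rule integral_cong)
    fix u assume "u \<in> {0..s}"
    then have u: "u \<in> {0..1}" using s by auto
    have hu: "tint (ANode \<nu>' b k' ALeaf ALeaf ALeaf) u = (wave \<nu>' u * b u - ibp_rest \<nu>' b b' u) / (\<i> * of_real \<nu>')"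
      using integration_by_parts[OF bm nz u] by simp
    show "wave \<nu> u * a u * tint (ANode \<nu>' b k' ALeaf ALeaf ALeaf) u * tint y u * tint z u = c * f1 u + (-c) * f2 u"
      using nz unfolding hu c_def f1_def f2_def wave_add by (simp add: field_simps)
  qed
  also have "\<dots> = c * integral {0..s} f1 + (-c) * integral {0..s} f2"
    using c1 c2 s by (rule integral_lin2)
  finally show ?thesis unfolding f1_def f2_def c_def by (simp add: mult_ac diff_divide_distrib)
qed

text \<open>Merging a one-node first child of large frequency \<open>\<nu>'\<close>: integration by parts gains
  \<open>1/\<bar>T\<nu>'\<bar>\<close>, and \<open>merge_ineq\<close> shows that the bounds of the two resulting trees add up to
  the bound of the parent.\<close>
lemma merge_large_freq:
  assumes w: "admissible (ANode \<nu> a k (ANode \<nu>' b k' ALeaf ALeaf ALeaf) y z)"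
    and T: "0 \<le> T" "T \<le> 1" and large: "1 \<le> \<bar>T*\<nu>'\<bar>"
  shows "reducible T (ANode \<nu> a k (ANode \<nu>' b k' ALeaf ALeaf ALeaf) y z)"
proof -
  let ?L = "ANode \<nu> a k (ANode \<nu>' b k' ALeaf ALeaf ALeaf) y z"
  let ?L1 = "ANode (\<nu>+\<nu>') (\<lambda>s. a s * b s) (k + k') ALeaf y z"
  obtain a' b' where am: "amplitude k a a'" and bm: "amplitude k' b b'" using w by auto
  let ?L2 = "ANode \<nu> (\<lambda>s. a s * ibp_rest \<nu>' b b' s) (k + k') ALeaf y z"
  have wy: "admissible y" "admissible z" using w by auto
  have Tp: "T > 0" and nz: "\<nu>' \<noteq> 0" using T large by (auto simp: le_less)
  define c where "c = 1 / (\<i> * complex_of_real \<nu>')"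
  have w1: "admissible ?L1" using amplitude_mult[OF am bm] wy by auto
  have w2: "admissible ?L2" using amplitude_mult[OF am amplitude_ibp_rest[OF bm]] wy by auto
  have eq: "tint ?L s = c * tint ?L1 s + (-c) * tint ?L2 s" if "s \<in> {0..T}" for s
    using tint_merge_by_parts[OF am bm wy nz, of s] that T unfolding c_def by (simp add: diff_divide_distrib)
  have nc: "norm c = T / \<bar>T*\<nu>'\<bar>" "norm (-c) = T / \<bar>T*\<nu>'\<bar>" unfolding c_def using Tp
    by (auto simp: norm_divide norm_mult abs_mult)
  define W where "W = 5 * T^(k+k') * tbound T y * tbound T z"
  have W0: "0 \<le> W" unfolding W_def using T tbound_nonneg by auto
  have B1: "tbound T ?L1 = W * T / hbr (T*\<nu> + T*\<nu>')" unfolding W_def by (simp add: distrib_left mult_ac)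
  have B2: "tbound T ?L2 = W * T / hbr (T*\<nu>)" unfolding W_def by (simp add: mult_ac)
  have BL: "tbound T ?L = W * (T * T) * (5 / (hbr (T*\<nu>) * hbr (T*\<nu>')))"
    unfolding W_def by (simp add: mult_ac power_add)
  have "norm c * tbound T ?L1 + norm (-c) * tbound T ?L2
      = W * (T * T) * ((1 / hbr (T*\<nu> + T*\<nu>') + 1 / hbr (T*\<nu>)) / \<bar>T*\<nu>'\<bar>)"
  proof -
    have "hbr (T*\<nu>) \<noteq> 0" "hbr (T*\<nu> + T*\<nu>') \<noteq> 0" "\<bar>T*\<nu>'\<bar> \<noteq> 0"
      using hbr_pos[of "T*\<nu>"] hbr_pos[of "T*\<nu> + T*\<nu>'"] large by auto
    then show ?thesis unfolding nc B1 B2 by (simp add: field_simps)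
  qed
  also have "\<dots> \<le> tbound T ?L"
    unfolding BL using merge_ineq[OF large, of "T*\<nu>"] W0 T by (intro mult_left_mono) auto
  finally have "norm c * tbound T ?L1 + norm (-c) * tbound T ?L2 \<le> tbound T ?L" .
  then show ?thesis unfolding reducible_def using w1 w2 eq
    by (intro exI[of _ c] exI[of _ ?L1] exI[of _ "-c"] exI[of _ ?L2]) auto
qed

lemma reducible_first_child:
  assumes w: "admissible (ANode \<nu> a k x y z)" and T: "0 \<le> T" "T \<le> 1" and x: "x \<noteq> ALeaf"
    and IH: "2 \<le> nsize x \<Longrightarrow> reducible T x"
  shows "reducible T (ANode \<nu> a k x y z)"
proof -
  obtain \<nu>' b k' x1 x2 x3 where xe: "x = ANode \<nu>' b k' x1 x2 x3" using x by (cases x) auto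
  show ?thesis
  proof (cases "2 \<le> nsize x")
    case True then show ?thesis using reducible_lift[OF w T IH] by simp
  next
    case False
    then have x1: "x = ANode \<nu>' b k' ALeaf ALeaf ALeaf" unfolding xe by (auto simp: nsize_0_iff[symmetric])
    show ?thesis
    proof (cases "\<bar>T*\<nu>'\<bar> \<le> 1")
      case True show ?thesis unfolding x1 by (rule merge_small_freq[OF w[unfolded x1] T True])
    next
      case False then show ?thesis using merge_large_freq[OF w[unfolded x1] T] unfolding x1 by simp
    qed
  qed
qed

text \<open>Every admissible tree with at least two nodes is reducible: rotate a non-leaf child into
  first position and either reduce it or merge it into the root.\<close>
lemma reducible_if_two_nodes:
  "admissible L \<Longrightarrow> 2 \<le> nsize L \<Longrightarrow> 0 \<le> T \<Longrightarrow> T \<le> 1 \<Longrightarrow> reducible T L"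
proof (induction L)
  case ALeaf then show ?case by simp
next
  case (ANode \<nu> a k x y z)
  have rot: "admissible (ANode \<nu> a k y z x)" "admissible (ANode \<nu> a k z x y)"
    using ANode.prems(1) by auto
  consider "x \<noteq> ALeaf" | "x = ALeaf" "y \<noteq> ALeaf" | "x = ALeaf" "y = ALeaf" "z \<noteq> ALeaf"
    using ANode.prems(2) by (cases "x = ALeaf"; cases "y = ALeaf"; cases "z = ALeaf") auto
  then show ?case
  proof cases
    case 1
    then show ?thesis using reducible_first_child[OF ANode.prems(1,3,4)] ANode by auto
  next
    case 2
    then have "reducible T (ANode \<nu> a k y z x)"
      using reducible_first_child[OF rot(1) ANode.prems(3,4)] ANode by auto
    then show ?thesis by (rule reducible_rotate)
  next
    case 3
    then have "reducible T (ANode \<nu> a k z x y)"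
      using reducible_first_child[OF rot(2) ANode.prems(3,4)] ANode by auto
    then show ?thesis by (rule reducible_rotate[OF reducible_rotate])
  qed
qed

theorem tint_bound: "admissible L \<Longrightarrow> 0 \<le> T \<Longrightarrow> T \<le> 1 \<Longrightarrow> norm (tint L T) \<le> tbound T L"
proof (induction "nsize L" arbitrary: L rule: less_induct)
  case less
  show ?case
  proof (cases "2 \<le> nsize L")
    case True
    obtain c1 L1 c2 L2 where p: "admissible L1" "admissible L2" "nsize L1 < nsize L" "nsize L2 < nsize L"
      "\<forall>s\<in>{0..T}. tint L s = c1 * tint L1 s + c2 * tint L2 s"
      "norm c1 * tbound T L1 + norm c2 * tbound T L2 \<le> tbound T L"
      using reducible_if_two_nodes[OF less.prems(1) True less.prems(2,3)] unfolding reducible_def by blast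
    have "norm (tint L T) = norm (c1 * tint L1 T + c2 * tint L2 T)" using p(5) less.prems by auto
    also have "\<dots> \<le> norm c1 * norm (tint L1 T) + norm c2 * norm (tint L2 T)"
      by (metis norm_mult norm_triangle_ineq)
    also have "\<dots> \<le> norm c1 * tbound T L1 + norm c2 * tbound T L2"
      using less.hyps[OF p(3) p(1) less.prems(2,3)] less.hyps[OF p(4) p(2) less.prems(2,3)]
      by (intro add_mono mult_left_mono) auto
    finally show ?thesis using p(6) by linarith
  next
    case False
    then consider "L = ALeaf" | \<nu> a k where "L = ANode \<nu> a k ALeaf ALeaf ALeaf"
      by (cases L) (auto simp: nsize_0_iff[symmetric])
    then show ?thesis
    proof cases
      case 2 then show ?thesis using tint_single_bound less.prems by simp
    qed simp
  qed
qed


section \<open>The integral over the time-ordered region\<close>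

abbreviation lebPi :: "nat list set \<Rightarrow> (nat list \<Rightarrow> real) measure" where
  "lebPi I \<equiv> PiM I (\<lambda>_. lborel)"

text \<open>Region, phase and integral of \<open>Defs\<close>, for an arbitrary finite set \<open>I\<close> of nodes, so that
  they can be restricted to subtrees.\<close>
definition region :: "nat list set \<Rightarrow> real \<Rightarrow> (nat list \<Rightarrow> real) set" where
  "region I t = {s \<in> I \<rightarrow>\<^sub>E UNIV. (\<forall>v\<in>I. 0 \<le> s v \<and> s v \<le> t) \<and>
     (\<forall>v\<in>I. \<forall>w\<in>I. desc v w \<longrightarrow> s v \<le> s w)}"

definition phase :: "(nat list \<Rightarrow> int) \<Rightarrow> nat list set \<Rightarrow> (nat list \<Rightarrow> real) \<Rightarrow> complex" where
  "phase j I s = (\<Prod>v\<in>I. exp (\<i> * of_real (of_int (sigmaT j v) * s v)))"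

definition integrand :: "(nat list \<Rightarrow> int) \<Rightarrow> nat list set \<Rightarrow> real \<Rightarrow> (nat list \<Rightarrow> real) \<Rightarrow> complex" where
  "integrand j I t s = indicator (region I t) s *\<^sub>R phase j I s"

definition region_integral :: "(nat list \<Rightarrow> int) \<Rightarrow> nat list set \<Rightarrow> real \<Rightarrow> complex" where
  "region_integral j I t = (\<integral>s. integrand j I t s \<partial>lebPi I)"

lemma IT_eq_region_integral: "IT T t j = region_integral j (inodes T) t"
  unfolding IT_def region_integral_def integrand_def RT_def region_def phase_def cjs_def ..

lemma space_lebPi: "space (lebPi I) = I \<rightarrow>\<^sub>E UNIV"
  by (simp add: space_PiM)

lemma region_sets: assumes "finite I" shows "region I t \<in> sets (lebPi I)"
proof -
  have "region I t = {s \<in> space (lebPi I). (\<forall>v\<in>I. 0 \<le> s v \<and> s v \<le> t) \<and>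
      (\<forall>v\<in>I. \<forall>w\<in>I. desc v w \<longrightarrow> s v \<le> s w)}"
    unfolding region_def space_lebPi ..
  also have "\<dots> \<in> sets (lebPi I)"
    using assms by measurable (auto simp: pred_def intro!: borel_measurable_le measurable_component_singleton)
  finally show ?thesis .
qed

lemma norm_phase: "norm (phase j I s) = 1"
  unfolding phase_def by (simp add: prod_norm[symmetric] norm_exp_i_times del: prod_norm)

lemma integrand_measurable: "finite I \<Longrightarrow> integrand j I u \<in> borel_measurable (lebPi I)"
  unfolding integrand_def phase_def using region_sets by measurable

lemma integrand_box: "norm (integrand j I u s) \<le> indicator (PiE I (\<lambda>_. {0..\<bar>u\<bar>})) s"
proof (cases "s \<in> region I u")
  case True
  then have "s \<in> PiE I (\<lambda>_. {0..\<bar>u\<bar>})" unfolding region_def by (auto simp: PiE_def Pi_def)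
  then show ?thesis using True unfolding integrand_def by (simp add: norm_phase)
qed (simp add: integrand_def)

interpretation lborel_product: product_sigma_finite "\<lambda>_::nat list. lborel :: real measure"
  by (simp add: product_sigma_finite_def lborel.sigma_finite_measure_axioms)

lemma integrable_box:
  fixes f :: "(nat list \<Rightarrow> real) \<Rightarrow> complex"
  assumes I: "finite I" and f: "f \<in> borel_measurable (lebPi I)"
    and b: "\<And>s. s \<in> space (lebPi I) \<Longrightarrow> norm (f s) \<le> indicator (PiE I (\<lambda>_. {0..c})) s"
  shows "integrable (lebPi I) f"
proof (rule Bochner_Integration.integrable_bound)
  have S: "PiE I (\<lambda>_. {0..c}) \<in> sets (lebPi I)" using I by (intro sets_PiM_I_finite) auto
  have "emeasure (lebPi I) (PiE I (\<lambda>_. {0..c})) = (\<Prod>i\<in>I. emeasure lborel {0..c})"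
    using I by (intro lborel_product.emeasure_PiM) auto
  also have "\<dots> < \<infinity>" by (simp add: less_top[symmetric] power_eq_top_ennreal emeasure_lborel_Icc_eq)
  finally have "emeasure (lebPi I) (PiE I (\<lambda>_. {0..c})) < \<infinity>" .
  then show "integrable (lebPi I) (indicator (PiE I (\<lambda>_. {0..c})) :: _ \<Rightarrow> real)"
    using S by (simp add: integrable_indicator_iff sets.Int_space_eq2)
  show "f \<in> borel_measurable (lebPi I)" by fact
  show "AE x in lebPi I. norm (f x) \<le> norm (indicator (PiE I (\<lambda>_. {0..c})) x :: real)"
    using b by (auto intro!: AE_I2)
qed

lemma product_measurable:
  fixes F G :: "(nat list \<Rightarrow> real) \<Rightarrow> complex"
  assumes F: "F \<in> borel_measurable (lebPi I)" and G: "G \<in> borel_measurable (lebPi K)"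
  shows "(\<lambda>s. F (restrict s I) * G (restrict s K)) \<in> borel_measurable (lebPi (I \<union> K))"
  using measurable_compose[OF measurable_restrict_subset[of I "I \<union> K"] F]
      measurable_compose[OF measurable_restrict_subset[of K "I \<union> K"] G]
  by (intro borel_measurable_times) auto

lemma product_box:
  fixes F G :: "(nat list \<Rightarrow> real) \<Rightarrow> complex"
  assumes bF: "\<And>s. s \<in> space (lebPi I) \<Longrightarrow> norm (F s) \<le> indicator (PiE I (\<lambda>_. {0..c})) s"
    and bG: "\<And>s. s \<in> space (lebPi K) \<Longrightarrow> norm (G s) \<le> indicator (PiE K (\<lambda>_. {0..c})) s"
    and s: "s \<in> space (lebPi (I \<union> K))"
  shows "norm (F (restrict s I) * G (restrict s K)) \<le> indicator (PiE (I \<union> K) (\<lambda>_. {0..c})) s"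
proof -
  have rI: "restrict s I \<in> space (lebPi I)" and rK: "restrict s K \<in> space (lebPi K)"
    using s unfolding space_lebPi by auto
  have "norm (F (restrict s I) * G (restrict s K)) = norm (F (restrict s I)) * norm (G (restrict s K))"
    by (simp add: norm_mult)
  also have "\<dots> \<le> indicator (PiE I (\<lambda>_. {0..c})) (restrict s I) * indicator (PiE K (\<lambda>_. {0..c})) (restrict s K)"
    using bF[OF rI] bG[OF rK] by (intro mult_mono) auto
  also have "\<dots> \<le> indicator (PiE (I \<union> K) (\<lambda>_. {0..c})) s"
    using s unfolding space_lebPi by (auto simp: indicator_def PiE_def Pi_def restrict_def)
  finally show ?thesis .
qed

lemma integral_product_split:
  fixes F G :: "(nat list \<Rightarrow> real) \<Rightarrow> complex"
  assumes IK: "I \<inter> K = {}" "finite I" "finite K"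
    and F: "F \<in> borel_measurable (lebPi I)" and G: "G \<in> borel_measurable (lebPi K)"
    and bF: "\<And>s. s \<in> space (lebPi I) \<Longrightarrow> norm (F s) \<le> indicator (PiE I (\<lambda>_. {0..c})) s"
    and bG: "\<And>s. s \<in> space (lebPi K) \<Longrightarrow> norm (G s) \<le> indicator (PiE K (\<lambda>_. {0..c})) s"
  shows "(\<integral>s. F (restrict s I) * G (restrict s K) \<partial>lebPi (I \<union> K)) = (\<integral>s. F s \<partial>lebPi I) * (\<integral>s. G s \<partial>lebPi K)"
proof -
  have int: "integrable (lebPi (I \<union> K)) (\<lambda>s. F (restrict s I) * G (restrict s K))"
    using IK by (intro integrable_box[where c=c] product_measurable[OF F G] product_box[OF bF bG]) auto
  have "(\<integral>s. F (restrict s I) * G (restrict s K) \<partial>lebPi (I \<union> K))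
      = (\<integral>x. (\<integral>y. F (restrict (merge I K (x, y)) I) * G (restrict (merge I K (x, y)) K) \<partial>lebPi K) \<partial>lebPi I)"
    using IK int by (intro lborel_product.product_integral_fold) auto
  also have "\<dots> = (\<integral>x. F x * (\<integral>y. G y \<partial>lebPi K) \<partial>lebPi I)"
  proof (rule Bochner_Integration.integral_cong[OF refl])
    fix x assume x: "x \<in> space (lebPi I)"
    have "(\<integral>y. F (restrict (merge I K (x, y)) I) * G (restrict (merge I K (x, y)) K) \<partial>lebPi K)
        = (\<integral>y. F x * G y \<partial>lebPi K)"
      using IK(1) x unfolding space_lebPi
      by (intro Bochner_Integration.integral_cong[OF refl]) (simp add: space_lebPi PiE_restrict)
    then show "(\<integral>y. F (restrict (merge I K (x, y)) I) * G (restrict (merge I K (x, y)) K) \<partial>lebPi K)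
        = F x * (\<integral>y. G y \<partial>lebPi K)" by simp
  qed
  also have "\<dots> = (\<integral>s. F s \<partial>lebPi I) * (\<integral>s. G s \<partial>lebPi K)" by simp
  finally show ?thesis .
qed


section \<open>Subtrees as sets of nodes\<close>

definition subnodes :: "nat list \<Rightarrow> tree \<Rightarrow> nat list set" where
  "subnodes \<pi> T = (\<lambda>p. \<pi> @ p) ` inodes T"

lemma finite_subnodes: "finite (subnodes \<pi> T)"
proof -
  have "finite (inodes T)" by (induction T) auto
  then show ?thesis unfolding subnodes_def by simp
qed

lemma subnodes_root: "subnodes [] T = inodes T"
  unfolding subnodes_def by simp

lemma subnodes_Leaf: "subnodes \<pi> Leaf = {}"
  unfolding subnodes_def by simp

lemma subnodes_Node:
  "subnodes \<pi> (Node a b c) = insert \<pi> (subnodes (\<pi>@[0]) a \<union> subnodes (\<pi>@[1]) b \<union> subnodes (\<pi>@[2]) c)"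
  unfolding subnodes_def by (auto simp: image_Un image_image)

lemma subnodes_child_form: "v \<in> subnodes (\<pi>@[i]) T \<Longrightarrow> \<exists>p. v = \<pi> @ i # p"
  unfolding subnodes_def by auto

lemma subnodes_child_notin: "\<pi> \<notin> subnodes (\<pi>@[i]) T"
  using subnodes_child_form by fastforce

lemma subnodes_child_disjoint: "i \<noteq> i' \<Longrightarrow> subnodes (\<pi>@[i]) T \<inter> subnodes (\<pi>@[i']) T' = {}"
  using subnodes_child_form[of _ \<pi> i T] subnodes_child_form[of _ \<pi> i' T'] by fastforce

lemma subnodes_Node_disjoint:
  "subnodes (\<pi>@[0]) a \<inter> subnodes (\<pi>@[1]) b = {}"
  "(subnodes (\<pi>@[0]) a \<union> subnodes (\<pi>@[1]) b) \<inter> subnodes (\<pi>@[2]) c = {}"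
  "subnodes (\<pi>@[0]) a \<inter> (subnodes (\<pi>@[1]) b \<union> subnodes (\<pi>@[2]) c) = {}"
  "\<pi> \<notin> subnodes (\<pi>@[0]) a \<union> subnodes (\<pi>@[1]) b \<union> subnodes (\<pi>@[2]) c"
  using subnodes_child_disjoint[of 0 1 \<pi> a b] subnodes_child_disjoint[of 0 2 \<pi> a c]
    subnodes_child_disjoint[of 1 2 \<pi> b c] subnodes_child_notin[of \<pi>] by auto

lemma desc_subnodes_child: "v \<in> subnodes (\<pi>@[i]) T \<Longrightarrow> desc v \<pi>"
  unfolding desc_def using subnodes_child_form by fastforce

lemma desc_same_child:
  assumes "v \<in> subnodes (\<pi>@[i]) T" "w \<in> subnodes (\<pi>@[i']) T'" "desc v w"
  shows "i = i'"
  using assms subnodes_child_form[OF assms(1)] subnodes_child_form[OF assms(2)] unfolding desc_def by fastforce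

lemma not_desc_root: "w \<in> subnodes \<pi> T \<Longrightarrow> \<not> desc \<pi> w"
  unfolding subnodes_def desc_def by auto

lemma phase_restrict: "phase j X (restrict s X) = phase j X s"
  unfolding phase_def by (rule prod.cong) auto

lemma desc_in_Node:
  fixes \<pi> a b c
  defines "Ch \<equiv> {subnodes (\<pi>@[0]) a, subnodes (\<pi>@[1]) b, subnodes (\<pi>@[2]) c}"
  assumes "v \<in> subnodes \<pi> (Node a b c)" "w \<in> subnodes \<pi> (Node a b c)" "desc v w"
  shows "v \<in> \<Union>Ch \<and> (w = \<pi> \<or> (\<exists>X\<in>Ch. v \<in> X \<and> w \<in> X))"
proof -
  have "v \<noteq> \<pi>" using not_desc_root[OF assms(3)] assms(4) by auto
  moreover have "w = \<pi> \<or> (\<exists>X\<in>Ch. v \<in> X \<and> w \<in> X)" if "v \<in> \<Union>Ch"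
    using that assms(3,4) desc_same_child[of v \<pi> _ _ w] unfolding Ch_def subnodes_Node by fastforce
  ultimately show ?thesis using assms(2) unfolding Ch_def subnodes_Node by auto
qed

lemma region_Node:
  fixes \<pi> a b c
  defines "Ch \<equiv> {subnodes (\<pi>@[0]) a, subnodes (\<pi>@[1]) b, subnodes (\<pi>@[2]) c}"
  assumes s: "s \<in> subnodes \<pi> (Node a b c) \<rightarrow>\<^sub>E UNIV"
  shows "s \<in> region (subnodes \<pi> (Node a b c)) t \<longleftrightarrow> 0 \<le> s \<pi> \<and> s \<pi> \<le> t \<and> (\<forall>X\<in>Ch. restrict s X \<in> region X (s \<pi>))"
proof -
  let ?N = "subnodes \<pi> (Node a b c)"
  have N: "?N = insert \<pi> (\<Union>Ch)" unfolding Ch_def subnodes_Node by auto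
  have below: "desc v \<pi>" if "v \<in> \<Union>Ch" for v
    using that desc_subnodes_child unfolding Ch_def by blast
  show ?thesis
  proof
    assume r: "s \<in> region ?N t"
    then have r1: "\<forall>v\<in>?N. 0 \<le> s v \<and> s v \<le> t" and r2: "\<forall>v\<in>?N. \<forall>w\<in>?N. desc v w \<longrightarrow> s v \<le> s w"
      unfolding region_def by auto
    have "restrict s X \<in> region X (s \<pi>)" if X: "X \<in> Ch" for X
      unfolding region_def
    proof (intro CollectI conjI ballI impI)
      show "restrict s X \<in> X \<rightarrow>\<^sub>E UNIV" by simp
      fix v assume v: "v \<in> X"
      then have v': "v \<in> ?N" using X N by blast
      show "0 \<le> restrict s X v" using r1 v' v by auto
      have "desc v \<pi>" using below v X by blast
      then show "restrict s X v \<le> s \<pi>" using r2 v' v N by auto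
      fix w assume w: "w \<in> X" and d: "desc v w"
      then have "s v \<le> s w" using r2 v' X N d by blast
      then show "restrict s X v \<le> restrict s X w" using v w by simp
    qed
    then show "0 \<le> s \<pi> \<and> s \<pi> \<le> t \<and> (\<forall>X\<in>Ch. restrict s X \<in> region X (s \<pi>))" using r1 N by auto
  next
    assume r: "0 \<le> s \<pi> \<and> s \<pi> \<le> t \<and> (\<forall>X\<in>Ch. restrict s X \<in> region X (s \<pi>))"
    have box: "\<forall>v\<in>X. 0 \<le> s v \<and> s v \<le> s \<pi>" and ord: "\<forall>v\<in>X. \<forall>w\<in>X. desc v w \<longrightarrow> s v \<le> s w"
      if "X \<in> Ch" for X
      using r that unfolding region_def by (auto simp: restrict_def)
    show "s \<in> region ?N t"
      unfolding region_def
    proof (intro CollectI conjI ballI impI)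
      show "s \<in> ?N \<rightarrow>\<^sub>E UNIV" by fact
      fix v assume v: "v \<in> ?N"
      then show "0 \<le> s v" "s v \<le> t" using box r unfolding N by fastforce+
      fix w assume "w \<in> ?N" "desc v w"
      then show "s v \<le> s w" using desc_in_Node[OF v] box ord unfolding Ch_def by fastforce
    qed
  qed
qed

lemma integrand_Node:
  assumes s: "s \<in> subnodes \<pi> (Node a b c) \<rightarrow>\<^sub>E UNIV"
  shows "integrand j (subnodes \<pi> (Node a b c)) t s = indicator {0..t} (s \<pi>) *\<^sub>R (wave (of_int (sigmaT j \<pi>)) (s \<pi>) *
     (integrand j (subnodes (\<pi>@[0]) a) (s \<pi>) (restrict s (subnodes (\<pi>@[0]) a)) *
      integrand j (subnodes (\<pi>@[1]) b) (s \<pi>) (restrict s (subnodes (\<pi>@[1]) b)) *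
      integrand j (subnodes (\<pi>@[2]) c) (s \<pi>) (restrict s (subnodes (\<pi>@[2]) c))))"
proof -
  let ?f = "\<lambda>v. exp (\<i> * of_real (of_int (sigmaT j v) * s v))"
  have "phase j (subnodes \<pi> (Node a b c)) s = ?f \<pi> *
      (prod ?f (subnodes (\<pi>@[0]) a) * prod ?f (subnodes (\<pi>@[1]) b) * prod ?f (subnodes (\<pi>@[2]) c))"
    unfolding phase_def subnodes_Node using subnodes_Node_disjoint
    by (simp add: finite_subnodes prod.union_disjoint)
  then have P: "phase j (subnodes \<pi> (Node a b c)) s = wave (of_int (sigmaT j \<pi>)) (s \<pi>) *
     (phase j (subnodes (\<pi>@[0]) a) (restrict s (subnodes (\<pi>@[0]) a)) *
      phase j (subnodes (\<pi>@[1]) b) (restrict s (subnodes (\<pi>@[1]) b)) *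
      phase j (subnodes (\<pi>@[2]) c) (restrict s (subnodes (\<pi>@[2]) c)))"
    unfolding phase_restrict by (simp add: phase_def wave_def)
  have "indicator (region (subnodes \<pi> (Node a b c)) t) s = (indicator {0..t} (s \<pi>) *
      (indicator (region (subnodes (\<pi>@[0]) a) (s \<pi>)) (restrict s (subnodes (\<pi>@[0]) a)) *
       indicator (region (subnodes (\<pi>@[1]) b) (s \<pi>)) (restrict s (subnodes (\<pi>@[1]) b)) *
       indicator (region (subnodes (\<pi>@[2]) c) (s \<pi>)) (restrict s (subnodes (\<pi>@[2]) c))) :: real)"
    using region_Node[OF s, of t] by (auto simp: indicator_def)
  then show ?thesis unfolding integrand_def P
    by (simp add: scaleR_conv_of_real mult_ac)
qed

lemma region_integral_Leaf: "region_integral j (subnodes \<pi> Leaf) t = 1"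
proof -
  have "(\<lambda>_. undefined) \<in> region {} t" unfolding region_def by auto
  then show ?thesis unfolding region_integral_def subnodes_Leaf PiM_empty
    by (simp add: lebesgue_integral_count_space_finite integrand_def phase_def)
qed

lemma region_integral_children:
  fixes u :: real and \<pi> a b c
  defines "Na \<equiv> subnodes (\<pi>@[0]) a" and "Nb \<equiv> subnodes (\<pi>@[1]) b" and "Nc \<equiv> subnodes (\<pi>@[2]) c"
  shows "(\<integral>y. integrand j Na u (restrict y Na) * (integrand j Nb u (restrict y Nb) * integrand j Nc u (restrict y Nc))
       \<partial>lebPi (Na \<union> Nb \<union> Nc))
     = region_integral j Na u * (region_integral j Nb u * region_integral j Nc u)"
proof -
  have fin: "finite Na" "finite Nb" "finite Nc" unfolding Na_def Nb_def Nc_def by (auto simp: finite_subnodes)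
  have dbc: "Nb \<inter> Nc = {}" unfolding Nb_def Nc_def by (rule subnodes_child_disjoint) simp
  have dabc: "Na \<inter> (Nb \<union> Nc) = {}" unfolding Na_def Nb_def Nc_def using subnodes_Node_disjoint(3) .
  let ?H = "\<lambda>z. integrand j Nb u (restrict z Nb) * integrand j Nc u (restrict z Nc)"
  have Hm: "?H \<in> borel_measurable (lebPi (Nb \<union> Nc))"
    using fin by (intro product_measurable integrand_measurable)
  have Hb: "norm (?H z) \<le> indicator (PiE (Nb \<union> Nc) (\<lambda>_. {0..\<bar>u\<bar>})) z" if "z \<in> space (lebPi (Nb \<union> Nc))" for z
    using that by (intro product_box integrand_box)
  have "(\<integral>y. integrand j Na u (restrict y Na) * (integrand j Nb u (restrict y Nb) * integrand j Nc u (restrict y Nc))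
       \<partial>lebPi (Na \<union> Nb \<union> Nc))
     = (\<integral>y. integrand j Na u (restrict y Na) * ?H (restrict y (Nb \<union> Nc)) \<partial>lebPi (Na \<union> (Nb \<union> Nc)))"
    by (simp add: Un_assoc)
  also have "\<dots> = region_integral j Na u * (\<integral>z. ?H z \<partial>lebPi (Nb \<union> Nc))"
    unfolding region_integral_def using dabc fin
    by (intro integral_product_split[where c="\<bar>u\<bar>"] integrand_measurable Hm integrand_box Hb) auto
  also have "(\<integral>z. ?H z \<partial>lebPi (Nb \<union> Nc)) = region_integral j Nb u * region_integral j Nc u"
    unfolding region_integral_def using dbc fin
    by (intro integral_product_split[where c="\<bar>u\<bar>"] integrand_measurable integrand_box) auto
  finally show ?thesis .
qed

lemma integrand_merge_root:
  fixes j \<pi> a b c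
  defines "Na \<equiv> subnodes (\<pi>@[0]) a" and "Nb \<equiv> subnodes (\<pi>@[1]) b" and "Nc \<equiv> subnodes (\<pi>@[2]) c"
  shows "integrand j (subnodes \<pi> (Node a b c)) t (merge {\<pi>} (Na \<union> Nb \<union> Nc) (x, y)) =
    indicator {0..t} (x \<pi>) *\<^sub>R (wave (of_int (sigmaT j \<pi>)) (x \<pi>) *
      (integrand j Na (x \<pi>) (restrict y Na) * (integrand j Nb (x \<pi>) (restrict y Nb) * integrand j Nc (x \<pi>) (restrict y Nc))))"
proof -
  let ?M = "Na \<union> Nb \<union> Nc" and ?s = "merge {\<pi>} (Na \<union> Nb \<union> Nc) (x, y)"
  have NM: "subnodes \<pi> (Node a b c) = {\<pi>} \<union> ?M" unfolding Na_def Nb_def Nc_def subnodes_Node by auto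
  have piM: "\<pi> \<notin> ?M" unfolding Na_def Nb_def Nc_def using subnodes_Node_disjoint(4) .
  have sN: "?s \<in> subnodes \<pi> (Node a b c) \<rightarrow>\<^sub>E UNIV"
    unfolding NM by (auto simp: merge_def PiE_def extensional_def)
  have rX: "restrict ?s X = restrict y X" if "X \<subseteq> ?M" for X
    using that piM by (auto simp: merge_def restrict_def fun_eq_iff)
  have "?s \<pi> = x \<pi>" by (simp add: merge_def)
  moreover have "restrict ?s Na = restrict y Na" "restrict ?s Nb = restrict y Nb" "restrict ?s Nc = restrict y Nc"
    using rX by auto
  ultimately show ?thesis unfolding integrand_Node[OF sN] by (simp add: Na_def Nb_def Nc_def mult_ac)
qed

lemma region_integral_Node:
  fixes j \<pi> a b c
  defines "Na \<equiv> subnodes (\<pi>@[0]) a" and "Nb \<equiv> subnodes (\<pi>@[1]) b" and "Nc \<equiv> subnodes (\<pi>@[2]) c"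
  shows "region_integral j (subnodes \<pi> (Node a b c)) t = (\<integral>x. indicator {0..t} (x \<pi>) *\<^sub>R
      (wave (of_int (sigmaT j \<pi>)) (x \<pi>) *
       (region_integral j Na (x \<pi>) * (region_integral j Nb (x \<pi>) * region_integral j Nc (x \<pi>)))) \<partial>lebPi {\<pi>})"
proof -
  define M where "M = Na \<union> Nb \<union> Nc"
  define N where "N = subnodes \<pi> (Node a b c)"
  have NM: "N = {\<pi>} \<union> M" unfolding N_def M_def Na_def Nb_def Nc_def subnodes_Node by auto
  have piM: "{\<pi>} \<inter> M = {}" unfolding M_def Na_def Nb_def Nc_def using subnodes_Node_disjoint(4) by auto
  have finM: "finite M" unfolding M_def Na_def Nb_def Nc_def by (auto simp: finite_subnodes)
  have "integrable (lebPi N) (integrand j N t)"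
    unfolding N_def by (rule integrable_box[where c="\<bar>t\<bar>"])
      (auto simp: finite_subnodes intro: integrand_measurable integrand_box)
  then have "region_integral j N t = (\<integral>x. (\<integral>y. integrand j N t (merge {\<pi>} M (x, y)) \<partial>lebPi M) \<partial>lebPi {\<pi>})"
    unfolding region_integral_def using piM finM
    by (subst NM, intro lborel_product.product_integral_fold) (auto simp: NM)
  also have "\<dots> = (\<integral>x. indicator {0..t} (x \<pi>) *\<^sub>R
      (wave (of_int (sigmaT j \<pi>)) (x \<pi>) *
       (region_integral j Na (x \<pi>) * (region_integral j Nb (x \<pi>) * region_integral j Nc (x \<pi>)))) \<partial>lebPi {\<pi>})"
    unfolding N_def M_def Na_def Nb_def Nc_def integrand_merge_root
    by (simp only: integral_scaleR_right integral_mult_right_zero region_integral_children)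
  finally show ?thesis unfolding N_def .
qed

section \<open>The frequency tree of a tree and the main estimate\<close>

fun freq_tree :: "tree \<Rightarrow> (nat list \<Rightarrow> int) \<Rightarrow> nat list \<Rightarrow> atree" where
  "freq_tree Leaf j \<pi> = ALeaf"
| "freq_tree (Node a b c) j \<pi> = ANode (of_int (sigmaT j \<pi>)) (\<lambda>_. 1) 0
     (freq_tree a j (\<pi>@[0])) (freq_tree b j (\<pi>@[1])) (freq_tree c j (\<pi>@[2]))"

lemma admissible_freq_tree: "admissible (freq_tree T j \<pi>)"
  by (induction T arbitrary: \<pi>) (auto intro: amplitude_const)

lemma region_integral_eq_tint:
  "0 \<le> t \<Longrightarrow> t \<le> 1 \<Longrightarrow> region_integral j (subnodes \<pi> T) t = tint (freq_tree T j \<pi>) t"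
proof (induction T arbitrary: \<pi> t)
  case Leaf then show ?case by (simp add: region_integral_Leaf)
next
  case (Node a b c)
  define \<sigma> where "\<sigma> = (of_int (sigmaT j \<pi>) :: real)"
  define g where "g u = wave \<sigma> u * 1 * tint (freq_tree a j (\<pi>@[0])) u * tint (freq_tree b j (\<pi>@[1])) u
    * tint (freq_tree c j (\<pi>@[2])) u" for u
  have gc: "continuous_on {0..t} g"
  proof -
    have "continuous_on {0..1} g"
      unfolding g_def using tint_cont[OF admissible_freq_tree] wave_cont by (intro continuous_intros) auto
    then show ?thesis by (rule continuous_on_subset) (use Node.prems in auto)
  qed
  have si: "set_integrable lborel {0..t} g"
    unfolding set_integrable_def by (intro borel_integrable_compact gc) auto
  have "region_integral j (subnodes \<pi> (Node a b c)) t = (\<integral>x. indicator {0..t} (x \<pi>) *\<^sub>R g (x \<pi>) \<partial>lebPi {\<pi>})"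
    unfolding region_integral_Node
  proof (rule Bochner_Integration.integral_cong[OF refl])
    fix x :: "nat list \<Rightarrow> real"
    show "indicator {0..t} (x \<pi>) *\<^sub>R (wave (of_int (sigmaT j \<pi>)) (x \<pi>) * (region_integral j (subnodes (\<pi>@[0]) a) (x \<pi>)
        * (region_integral j (subnodes (\<pi>@[1]) b) (x \<pi>) * region_integral j (subnodes (\<pi>@[2]) c) (x \<pi>))))
      = indicator {0..t} (x \<pi>) *\<^sub>R g (x \<pi>)"
      using Node.IH Node.prems by (cases "x \<pi> \<in> {0..t}") (auto simp: g_def \<sigma>_def)
  qed
  also have "\<dots> = (\<integral>u. indicator {0..t} u *\<^sub>R g u \<partial>lborel)"
    using si unfolding set_integrable_def by (intro lborel_product.product_integral_singleton) auto
  also have "\<dots> = integral {0..t} g"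
    using set_borel_integral_eq_integral(2)[OF si] unfolding set_lebesgue_integral_def .
  also have "\<dots> = tint (freq_tree (Node a b c) j \<pi>) t" unfolding g_def \<sigma>_def by simp
  finally show ?case .
qed

lemma tbound_freq_tree:
  assumes "0 \<le> t" "t \<le> 1"
  shows "tbound t (freq_tree T j \<pi>) \<le> (\<Prod>v\<in>subnodes \<pi> T. 5 * sqrt t / hbr (of_int (sigmaT j v)))"
proof (induction T arbitrary: \<pi>)
  case Leaf then show ?case by (simp add: subnodes_Leaf)
next
  case (Node a b c)
  let ?f = "\<lambda>v. 5 * sqrt t / hbr (of_int (sigmaT j v))"
  have fnn: "0 \<le> ?f v" for v using assms hbr_pos[of "of_int (sigmaT j v)"] by auto
  have "tbound t (freq_tree (Node a b c) j \<pi>) = 5 * t / hbr (t * of_int (sigmaT j \<pi>)) * tbound t (freq_tree a j (\<pi>@[0]))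
      * tbound t (freq_tree b j (\<pi>@[1])) * tbound t (freq_tree c j (\<pi>@[2]))" by simp
  also have "\<dots> \<le> ?f \<pi> * prod ?f (subnodes (\<pi>@[0]) a) * prod ?f (subnodes (\<pi>@[1]) b) * prod ?f (subnodes (\<pi>@[2]) c)"
  proof (intro mult_mono Node.IH tbound_nonneg mult_nonneg_nonneg prod_nonneg fnn)
    show "5 * t / hbr (t * of_int (sigmaT j \<pi>)) \<le> ?f \<pi>"
      using mult_left_mono[OF hbr_rescale[OF assms, of "of_int (sigmaT j \<pi>)"], of 5] by simp
  qed (use assms in auto)
  also have "\<dots> = (\<Prod>v\<in>subnodes \<pi> (Node a b c). ?f v)"
    unfolding subnodes_Node using subnodes_Node_disjoint
    by (simp add: finite_subnodes prod.union_disjoint mult_ac)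
  finally show ?case .
qed

theorem lemma3p2:
  shows "\<exists>C::real. C > 0 \<and> (\<forall>T j t. j \<in> JT T \<longrightarrow> 0 \<le> t \<longrightarrow> t \<le> 1 \<longrightarrow>
     norm (IT T t j) \<le> sqrt ((C * t) ^ card (inodes T)) *
       (\<Prod>v\<in>inodes T. jbr (real_of_int (sigmaT j v)) powr (-1/2)))"
proof (intro exI[of _ 25] conjI allI impI)
  fix T j and t :: real assume t: "0 \<le> t" "t \<le> 1"
  let ?n = "card (inodes T)" and ?P = "\<Prod>v\<in>inodes T. jbr (real_of_int (sigmaT j v)) powr (-1/2)"
  have "norm (IT T t j) = norm (tint (freq_tree T j []) t)"
    unfolding IT_eq_region_integral region_integral_eq_tint[OF t, of j "[]" T, unfolded subnodes_root] ..
  also have "\<dots> \<le> tbound t (freq_tree T j [])"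
    using tint_bound[OF admissible_freq_tree t] .
  also have "\<dots> \<le> (\<Prod>v\<in>inodes T. 5 * sqrt t / hbr (of_int (sigmaT j v)))"
    using tbound_freq_tree[OF t, of T j "[]"] by (simp add: subnodes_root)
  also have "\<dots> = (\<Prod>v\<in>inodes T. 5 * sqrt t * jbr (real_of_int (sigmaT j v)) powr (-1/2))"
    unfolding jbr_powr_neg_half by simp
  also have "\<dots> = (5 * sqrt t) ^ ?n * ?P"
    by (simp only: prod.distrib prod_constant power_mult_distrib)
  also have "(5 * sqrt t) ^ ?n = sqrt ((25 * t) ^ ?n)"
    by (simp add: real_sqrt_power real_sqrt_mult)
  finally show "norm (IT T t j) \<le> sqrt ((25 * t) ^ ?n) * ?P" .
qed simp

end
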